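(* Let $M$ be a monoid with $M\neq\{1_M\}$ and let $T=(-)\times M$ be the writer monad, applied pointwise as an indexed monad on $\mathrm{Fam}(\mathbf{Set})$, with unit $\eta_A(a)=(a,1_M)$. Take $\Gamma=1$, $A=1$ and the family $B$ over $\Gamma.TA\cong M$ given by $B(m)=1$ if $m=1_M$ and $B(m)=\emptyset$ otherwise. Then the set $\prod_{(c,a)\in\Gamma.A}B(c,(a,1_M))\times M$ is nonempty while $\prod_{(c,t)\in\Gamma.TA}B(c,t)\times M$ is empty. Consequently there is no map $\mathrm{Fam}(\mathbf{Set})(\Gamma.A)(1,TB\{\mathbf{p}_\Gamma(\eta_A)\})\to\mathrm{Fam}(\mathbf{Set})(\Gamma.TA)(1,TB)$, so the Eilenberg–Moore dCBPV$^-$ model of $T$ on $\mathrm{Fam}(\mathbf{Set})$ admits no dependent Kleisli extensions.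
   Context: $\mathrm{Fam}(\mathbf{Set}):\mathbf{Set}^{op}\to\mathbf{Cat}$ sends a set $X$ to the category of $X$-indexed families of sets $(A(x))_{x\in X}$ with families of functions as morphisms, reindexing by precomposition. Its comprehension is $X.A=\{(x,a)\mid x\in X, a\in A(x)\}$ with first projection, and global elements $1\to A$ in the fibre over $X$ are dependent functions $\prod_{x\in X}A(x)$. For a morphism $g:A\to A'$ in a fibre over $\Gamma$, $\mathbf{p}_\Gamma(g):\Gamma.A\to\Gamma.A'$ is $(c,a)\mapsto(c,g_c(a))$. A pointwise monad $T$ acts by $(TA)(x)=T(A(x))$. Dependent Kleisli extensions (for empty trailing context) are maps assigning to each global section of $UFB\{\mathbf{p}_\Gamma(\eta_A)\}$ over $\Gamma.A$ a global section of $UFB$ over $\Gamma.UFA$, for $B$ over $\Gamma.UFA$, subject to unitality and composition laws; here $UF=T$. *)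

theory Defs
  imports "HOL-Library.FuncSet"
begin

text \<open>Fam(Set): a family over an index type X is a function X \<Rightarrow> 'b set.
  Global elements 1 \<rightarrow> A in the fibre over X are dependent functions (extensional Pi).\<close>
definition glob :: "('x \<Rightarrow> 'b set) \<Rightarrow> ('x \<Rightarrow> 'b) set" where
  "glob A = Pi\<^sub>E UNIV A"

definition writerT :: "('x \<Rightarrow> 'b set) \<Rightarrow> 'x \<Rightarrow> ('b \<times> 'm) set" where
  "writerT A x = A x \<times> (UNIV :: 'm set)"

definition writer_eta :: "'a \<Rightarrow> 'a \<times> 'm::monoid_mult" where
  "writer_eta a = (a, 1)"

text \<open>p_Gamma(g) : Gamma.A \<rightarrow> Gamma.A', (c,a) \<mapsto> (c, g_c a) (here g constant in c).\<close>
definition pGamma :: "('a \<Rightarrow> 'a') \<Rightarrow> 'c \<times> 'a \<Rightarrow> 'c \<times> 'a'" where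
  "pGamma g = (\<lambda>(c, a). (c, g a))"

definition reindex :: "('y \<Rightarrow> 'b set) \<Rightarrow> ('x \<Rightarrow> 'y) \<Rightarrow> 'x \<Rightarrow> 'b set" where
  "reindex B f = B \<circ> f"

definition Bfam :: "unit \<times> (unit \<times> 'm::monoid_mult) \<Rightarrow> unit set" where
  "Bfam = (\<lambda>(c, (a, m)). if m = 1 then {()} else {})"

end

theory Submission
  imports Defs
begin

text \<open>Precomposing B with the unit only looks at the fibres over ((), 1), all of which
  are inhabited, so the domain of a dependent Kleisli extension for B is nonempty. Its
  codomain, however, needs a point of B over every ((), m), and B is empty wherever
  m \<noteq> 1; a function from a nonempty set into the empty set cannot exist.\<close>

lemma glob_eq_empty_iff: "glob A = {} \<longleftrightarrow> (\<exists>x. A x = {})"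
  by (simp add: glob_def PiE_eq_empty_iff)

lemma writerT_eq_empty_iff: "writerT A x = {} \<longleftrightarrow> A x = {}"
  by (simp add: writerT_def)

lemma funcset_empty_if_nonempty_domain: "A \<noteq> {} \<Longrightarrow> B = {} \<Longrightarrow> A \<rightarrow> B = {}"
  by auto

lemma Bfam_reindex_eta: "reindex Bfam (pGamma writer_eta) x = {()}"
  by (cases x) (simp add: reindex_def pGamma_def writer_eta_def Bfam_def)

lemma Bfam_eq_empty_iff: "Bfam (c, (a, m)) = {} \<longleftrightarrow> m \<noteq> 1"
  by (simp add: Bfam_def)

lemma glob_writerT_Bfam_reindex_eta_nonempty:
  "glob (writerT (reindex (Bfam :: unit \<times> (unit \<times> 'm::monoid_mult) \<Rightarrow> unit set)
     (pGamma (writer_eta :: unit \<Rightarrow> unit \<times> 'm))) :: unit \<times> unit \<Rightarrow> (unit \<times> 'm) set) \<noteq> {}"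
  by (simp add: glob_eq_empty_iff writerT_eq_empty_iff Bfam_reindex_eta)

lemma glob_writerT_Bfam_empty:
  assumes "(UNIV :: 'm::monoid_mult set) \<noteq> {1}"
  shows "glob (writerT (Bfam :: unit \<times> (unit \<times> 'm) \<Rightarrow> unit set)
           :: unit \<times> (unit \<times> 'm) \<Rightarrow> (unit \<times> 'm) set) = {}"
proof -
  obtain m :: 'm where "m \<noteq> 1"
    using assms by blast
  then have "Bfam ((), ((), m)) = {}"
    by (simp add: Bfam_eq_empty_iff)
  then show ?thesis
    by (auto simp: glob_eq_empty_iff writerT_eq_empty_iff)
qed

theorem mainTheorem5:
  assumes nontriv: "(UNIV :: 'm::monoid_mult set) \<noteq> {1}"
  shows "glob (writerT (reindex (Bfam :: unit \<times> (unit \<times> 'm) \<Rightarrow> unit set)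
                  (pGamma (writer_eta :: unit \<Rightarrow> unit \<times> 'm))) :: unit \<times> unit \<Rightarrow> (unit \<times> 'm) set) \<noteq> {}
       \<and> glob (writerT (Bfam :: unit \<times> (unit \<times> 'm) \<Rightarrow> unit set) :: unit \<times> (unit \<times> 'm) \<Rightarrow> (unit \<times> 'm) set) = {}
       \<and> \<not> (\<exists>f. f \<in> glob (writerT (reindex (Bfam :: unit \<times> (unit \<times> 'm) \<Rightarrow> unit set)
                            (pGamma (writer_eta :: unit \<Rightarrow> unit \<times> 'm))) :: unit \<times> unit \<Rightarrow> (unit \<times> 'm) set)
                  \<rightarrow> glob (writerT (Bfam :: unit \<times> (unit \<times> 'm) \<Rightarrow> unit set) :: unit \<times> (unit \<times> 'm) \<Rightarrow> (unit \<times> 'm) set))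
       \<and> \<not> (\<exists>ext. \<forall>B :: unit \<times> (unit \<times> 'm) \<Rightarrow> unit set.
                 ext B \<in> glob (writerT (reindex B (pGamma (writer_eta :: unit \<Rightarrow> unit \<times> 'm))) :: unit \<times> unit \<Rightarrow> (unit \<times> 'm) set)
                         \<rightarrow> glob (writerT B :: unit \<times> (unit \<times> 'm) \<Rightarrow> (unit \<times> 'm) set))"
  (is "?dom \<noteq> {} \<and> ?cod = {} \<and> \<not> (\<exists>f. f \<in> ?dom \<rightarrow> ?cod) \<and> ?no_ext")
proof -
  have dom: "?dom \<noteq> {}"
    by (rule glob_writerT_Bfam_reindex_eta_nonempty)
  have cod: "?cod = {}"
    using nontriv by (rule glob_writerT_Bfam_empty)
  have no_map: "\<not> (\<exists>f. f \<in> ?dom \<rightarrow> ?cod)"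
    using funcset_empty_if_nonempty_domain[OF dom cod] by blast
  moreover have ?no_ext
    using no_map by blast
  ultimately show ?thesis
    using dom cod by blast
qed

end
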